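(* On the unit sphere with spherical coordinates $(\varphi,\theta)$ (longitude $\varphi$, polar angle $\theta$, metric $\sin^2\theta\,d\varphi^2+d\theta^2$), let $0<R<\pi/2$ and let $\gamma_\varepsilon(t)=(t+\varepsilon u(t),\,R+\varepsilon v(t))$ be an infinitesimal deformation of the circle of latitude $\gamma_0(t)=(t,R)$, where $u,v$ are smooth $2\pi$-periodic functions. Fix $\alpha\in(0,\pi)$ and define $f_\varepsilon(t)\in(0,\pi)$ by $\sin\alpha\cot f_\varepsilon(t)=\kappa_\varepsilon(t)$, where $\kappa_\varepsilon(t)$ is the geodesic curvature of $\gamma_\varepsilon$ at $\gamma_\varepsilon(t)$, and write $f_\varepsilon(t)=f_0+\varepsilon g(t)+O(\varepsilon^2)$. Then $g$ is $L^2$-orthogonal to the first harmonics: $\int_0^{2\pi}g(t)\cos t\,dt=\int_0^{2\pi}g(t)\sin t\,dt=0$.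
   Context: All quantities are computed to first order in $\varepsilon$. $f_0$ is the constant with $\sin\alpha\cot f_0=\cot R$, the geodesic curvature of the circle $\gamma_0$. *)

theory Defs
  imports "HOL-Analysis.Analysis" "HOL-Analysis.Cross3" "HOL-Library.Landau_Symbols"
begin

definition smooth_fun :: "(real \<Rightarrow> real) \<Rightarrow> bool" where
  "smooth_fun u \<longleftrightarrow> (\<forall>n x. (deriv ^^ n) u differentiable (at x))"

definition sph :: "real \<Rightarrow> real \<Rightarrow> real^3" where
  "sph \<phi> \<theta> = vector [sin \<theta> * cos \<phi>, sin \<theta> * sin \<phi>, cos \<theta>]"

text \<open>Geodesic curvature of a regular curve c on the unit sphere (outer unit normal N = c):
  kappa_g = <c'', N x c'> / |c'|^3.\<close>
definition geod_curv :: "(real \<Rightarrow> real^3) \<Rightarrow> real \<Rightarrow> real" where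
  "geod_curv c t =
     (vector_derivative (\<lambda>s. vector_derivative c (at s)) (at t) \<bullet> cross3 (c t) (vector_derivative c (at t)))
     / norm (vector_derivative c (at t)) ^ 3"

definition deformed_curve :: "real \<Rightarrow> (real \<Rightarrow> real) \<Rightarrow> (real \<Rightarrow> real) \<Rightarrow> real \<Rightarrow> real \<Rightarrow> real^3" where
  "deformed_curve R u v \<epsilon> t = sph (t + \<epsilon> * u t) (R + \<epsilon> * v t)"

definition arccot :: "real \<Rightarrow> real" where
  "arccot x = pi / 2 - arctan x"

definition fdef :: "real \<Rightarrow> real \<Rightarrow> (real \<Rightarrow> real) \<Rightarrow> (real \<Rightarrow> real) \<Rightarrow> real \<Rightarrow> real \<Rightarrow> real" where
  "fdef \<alpha> R u v \<epsilon> t = arccot (geod_curv (deformed_curve R u v \<epsilon>) t / sin \<alpha>)"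

end

theory Submission
  imports Defs
begin

text \<open>Along a circle of latitude the linearization of the geodesic curvature is
  \<open>\<kappa>' = -(v'' + v) / sin\<^sup>2 R\<close>, independently of the tangential part \<open>u\<close> of the deformation,
  and \<open>g\<close> is a constant multiple of it. Integrating \<open>(v'' + v) cos t\<close> and \<open>(v'' + v) sin t\<close>
  by parts twice moves both derivatives onto the harmonic, which satisfies \<open>y'' + y = 0\<close>; what
  remains are boundary terms, and they cancel because \<open>v\<close> and \<open>v'\<close> are \<open>2\<pi>\<close>-periodic.\<close>

lemma vector3_has_vector_derivative:
  assumes "(f has_real_derivative f') (at x)" "(g has_real_derivative g') (at x)"
    and "(h has_real_derivative h') (at x)"
  shows "((\<lambda>t. vector [f t, g t, h t] :: real^3) has_vector_derivative vector [f', g', h']) (at x)"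
proof -
  have scaled: "((\<lambda>t. k t *\<^sub>R c) has_vector_derivative k' *\<^sub>R c) (at x)"
    if "(k has_real_derivative k') (at x)" for k k' and c :: "real^3"
    using has_vector_derivative_scaleR[OF that has_vector_derivative_const[of c]] by simp
  have split: "(vector [a, b, c] :: real^3) = a *\<^sub>R axis 1 1 + b *\<^sub>R axis 2 1 + c *\<^sub>R axis 3 1"
    for a b c :: real
    by (simp add: vec_eq_iff forall_3 axis_def)
  show ?thesis
    unfolding split by (intro has_vector_derivative_add scaled assms)
qed

definition sph_velocity :: "real \<Rightarrow> real \<Rightarrow> real \<Rightarrow> real \<Rightarrow> real^3" where
  "sph_velocity \<phi> \<phi>' \<theta> \<theta>' = vector
     [cos \<theta> * \<theta>' * cos \<phi> - sin \<theta> * sin \<phi> * \<phi>',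
      cos \<theta> * \<theta>' * sin \<phi> + sin \<theta> * cos \<phi> * \<phi>',
      - sin \<theta> * \<theta>']"

definition sph_acceleration :: "real \<Rightarrow> real \<Rightarrow> real \<Rightarrow> real \<Rightarrow> real \<Rightarrow> real \<Rightarrow> real^3" where
  "sph_acceleration \<phi> \<phi>' \<phi>'' \<theta> \<theta>' \<theta>'' = vector
     [- sin \<theta> * \<theta>'^2 * cos \<phi> + cos \<theta> * \<theta>'' * cos \<phi> - 2 * cos \<theta> * \<theta>' * sin \<phi> * \<phi>'
        - sin \<theta> * cos \<phi> * \<phi>'^2 - sin \<theta> * sin \<phi> * \<phi>'',
      - sin \<theta> * \<theta>'^2 * sin \<phi> + cos \<theta> * \<theta>'' * sin \<phi> + 2 * cos \<theta> * \<theta>' * cos \<phi> * \<phi>'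
        - sin \<theta> * sin \<phi> * \<phi>'^2 + sin \<theta> * cos \<phi> * \<phi>'',
      - cos \<theta> * \<theta>'^2 - sin \<theta> * \<theta>'']"

definition sph_geod_curv :: "real \<Rightarrow> real \<Rightarrow> real \<Rightarrow> real \<Rightarrow> real \<Rightarrow> real" where
  "sph_geod_curv \<phi>' \<phi>'' \<theta> \<theta>' \<theta>'' =
     (sin \<theta> * (\<theta>' * \<phi>'' - \<phi>' * \<theta>'') + cos \<theta> * \<phi>' * (2 * \<theta>'^2 + (sin \<theta>)^2 * \<phi>'^2))
     / sqrt (\<theta>'^2 + (sin \<theta>)^2 * \<phi>'^2) ^ 3"

lemma inner_sph_velocity:
  "sph_velocity \<phi> \<phi>' \<theta> \<theta>' \<bullet> sph_velocity \<phi> \<phi>' \<theta> \<theta>' = \<theta>'^2 + (sin \<theta>)^2 * \<phi>'^2"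
proof -
  have pythagoras: "(sin \<phi>)^2 + (cos \<phi>)^2 = 1" "(sin \<theta>)^2 + (cos \<theta>)^2 = 1"
    by simp_all
  show ?thesis
    unfolding sph_velocity_def by (simp add: inner_vec_def sum_3) (use pythagoras in algebra)
qed

lemma inner_sph_acceleration_cross3:
  "sph_acceleration \<phi> \<phi>' \<phi>'' \<theta> \<theta>' \<theta>'' \<bullet> cross3 (sph \<phi> \<theta>) (sph_velocity \<phi> \<phi>' \<theta> \<theta>')
     = sin \<theta> * (\<theta>' * \<phi>'' - \<phi>' * \<theta>'') + cos \<theta> * \<phi>' * (2 * \<theta>'^2 + (sin \<theta>)^2 * \<phi>'^2)"
proof -
  have pythagoras: "(sin \<phi>)^2 + (cos \<phi>)^2 = 1" "(sin \<theta>)^2 + (cos \<theta>)^2 = 1"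
    by simp_all
  show ?thesis
    unfolding sph_acceleration_def sph_velocity_def sph_def
    by (simp add: cross3_simps) (use pythagoras in algebra)
qed

lemma geod_curv_sph_curve:
  assumes "\<And>t. (\<phi> has_real_derivative \<phi>' t) (at t)" "\<And>t. (\<phi>' has_real_derivative \<phi>'' t) (at t)"
    and "\<And>t. (\<theta> has_real_derivative \<theta>' t) (at t)" "\<And>t. (\<theta>' has_real_derivative \<theta>'' t) (at t)"
  shows "geod_curv (\<lambda>t. sph (\<phi> t) (\<theta> t)) t = sph_geod_curv (\<phi>' t) (\<phi>'' t) (\<theta> t) (\<theta>' t) (\<theta>'' t)"
proof -
  have velocity: "vector_derivative (\<lambda>t. sph (\<phi> t) (\<theta> t)) (at s) = sph_velocity (\<phi> s) (\<phi>' s) (\<theta> s) (\<theta>' s)"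
    for s
    unfolding sph_def sph_velocity_def
    by (intro vector_derivative_at vector3_has_vector_derivative)
      (rule derivative_eq_intros assms refl | simp add: algebra_simps)+
  have acceleration:
    "vector_derivative (\<lambda>s. sph_velocity (\<phi> s) (\<phi>' s) (\<theta> s) (\<theta>' s)) (at t)
       = sph_acceleration (\<phi> t) (\<phi>' t) (\<phi>'' t) (\<theta> t) (\<theta>' t) (\<theta>'' t)"
    unfolding sph_velocity_def sph_acceleration_def
    by (intro vector_derivative_at vector3_has_vector_derivative)
      (rule derivative_eq_intros assms refl | simp add: algebra_simps power2_eq_square)+
  show ?thesis
    unfolding geod_curv_def velocity acceleration inner_sph_acceleration_cross3 sph_geod_curv_def
    by (simp add: norm_eq_sqrt_inner inner_sph_velocity)
qed

lemma sph_geod_curv_latitude_has_real_derivative: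
  assumes "0 < R" "R < pi"
  shows "((\<lambda>e. sph_geod_curv (1 + e * a') (e * a'') (R + e * b) (e * b') (e * b''))
           has_real_derivative -(b'' + b) / (sin R)^2) (at 0)"
proof -
  have "sin R > 0"
    using assms by (simp add: sin_gt_zero)
  define N where "N e = sin (R + e * b) * (e * b' * (e * a'') - (1 + e * a') * (e * b''))
    + cos (R + e * b) * (1 + e * a') * (2 * (e * b')^2 + (sin (R + e * b))^2 * (1 + e * a')^2)" for e
  define S where "S e = (e * b')^2 + (sin (R + e * b))^2 * (1 + e * a')^2" for e
  have S0: "S 0 = (sin R)^2"
    by (simp add: S_def)
  have "(S has_real_derivative 2 * sin R * (cos R * b + sin R * a')) (at 0)"
    unfolding S_def[abs_def] by (rule derivative_eq_intros refl | simp add: algebra_simps power2_eq_square)+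
  then have "((\<lambda>e. sqrt (S e)) has_real_derivative cos R * b + sin R * a') (at 0)"
    using \<open>sin R > 0\<close> by (auto intro!: derivative_eq_intros simp: S0)
  from DERIV_power[OF this, of 3]
  have denominator: "((\<lambda>e. sqrt (S e) ^ 3) has_real_derivative 3 * (sin R)^2 * (cos R * b + sin R * a')) (at 0)"
    using \<open>sin R > 0\<close> by (simp add: S0 algebra_simps)
  have numerator: "(N has_real_derivative
      - sin R * b'' - (sin R)^3 * b + 3 * cos R * (sin R)^2 * a' + 2 * sin R * (cos R)^2 * b) (at 0)"
    unfolding N_def[abs_def]
    by (rule derivative_eq_intros refl | simp add: algebra_simps power2_eq_square power3_eq_cube)+
  have "(\<lambda>e. sph_geod_curv (1 + e * a') (e * a'') (R + e * b) (e * b') (e * b'')) = (\<lambda>e. N e / sqrt (S e) ^ 3)"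
    by (simp add: sph_geod_curv_def N_def S_def)
  moreover have "((- sin R * b'' - (sin R)^3 * b + 3 * cos R * (sin R)^2 * a' + 2 * sin R * (cos R)^2 * b)
        * sqrt (S 0) ^ 3 - N 0 * (3 * (sin R)^2 * (cos R * b + sin R * a')))
      / (sqrt (S 0) ^ 3 * sqrt (S 0) ^ 3) = -(b'' + b) / (sin R)^2"
  proof -
    have pythagoras: "(sin R)^2 + (cos R)^2 = 1"
      by simp
    show ?thesis
      using \<open>sin R > 0\<close> by (simp add: N_def S0 field_simps) (use pythagoras in algebra)
  qed
  with DERIV_divide[OF numerator denominator] \<open>sin R > 0\<close>
  have "((\<lambda>e. N e / sqrt (S e) ^ 3) has_real_derivative -(b'' + b) / (sin R)^2) (at 0)"
    by (simp add: S0)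
  ultimately show ?thesis by simp
qed

lemma DERIV_arccot: "(arccot has_real_derivative - inverse (1 + x^2)) (at x)"
  unfolding arccot_def[abs_def] by (auto intro!: derivative_eq_intros)

lemma first_order_coeff_eq_deriv:
  fixes F :: "real \<Rightarrow> real"
  assumes "(F has_real_derivative D) (at 0)" "(\<lambda>e. F e - F 0 - e * c) \<in> O[at 0](\<lambda>e. e^2)"
  shows "c = D"
proof -
  have "(\<lambda>e::real. e^2) \<in> o[at 0](\<lambda>e. e)"
    by (rule smalloI_tendsto) (auto simp: power2_eq_square eventually_neq_at_within)
  with assms(2) have "(\<lambda>e. F e - F 0 - e * c) \<in> o[at 0](\<lambda>e. e)"
    by (rule landau_o.big_small_trans)
  then have remainder: "((\<lambda>e. (F e - F 0 - e * c) / e) \<longlongrightarrow> 0) (at 0)"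
    by (rule smalloD_tendsto)
  have difference_quotient: "((\<lambda>e. (F e - F 0) / e - c) \<longlongrightarrow> D - c) (at 0)"
    using assms(1) by (intro tendsto_diff tendsto_const) (simp add: has_field_derivative_iff)
  have "\<forall>\<^sub>F e in at 0. (F e - F 0) / e - c = (F e - F 0 - e * c) / e"
    using eventually_neq_at_within[of 0 0 UNIV] by eventually_elim (simp add: field_simps)
  from tendsto_cong[OF this, THEN iffD1, OF difference_quotient]
  have "((\<lambda>e. (F e - F 0 - e * c) / e) \<longlongrightarrow> D - c) (at 0)" .
  from tendsto_unique[OF _ this remainder] show ?thesis
    by simp
qed

lemma has_real_derivative_periodic:
  assumes "\<forall>t. f (t + T) = f t" "\<And>x. (f has_real_derivative f' x) (at x)"
  shows "f' (x + T) = f' x"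
proof -
  have "((\<lambda>t. f (t + T)) has_real_derivative f' (x + T) * 1) (at x)"
    by (rule DERIV_chain2[OF assms(2)]) (auto intro!: derivative_eq_intros)
  moreover have "(\<lambda>t. f (t + T)) = f"
    using assms(1) by auto
  ultimately show ?thesis
    using DERIV_unique[OF _ assms(2)] by simp
qed

lemma has_integral_deriv2_add_harmonics:
  assumes periodic: "\<forall>t. v (t + 2 * pi) = v t"
    and v': "\<And>x. (v has_real_derivative v' x) (at x)"
    and v'': "\<And>x. (v' has_real_derivative v'' x) (at x)"
  shows "((\<lambda>t. (v'' t + v t) * cos t) has_integral 0) {0..2 * pi}"
    and "((\<lambda>t. (v'' t + v t) * sin t) has_integral 0) {0..2 * pi}"
proof -
  have v'_periodic: "v' (2 * pi) = v' 0"
    using has_real_derivative_periodic[OF periodic v', of 0] by simp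
  have v_periodic: "v (2 * pi) = v 0"
    using periodic[rule_format, of 0] by simp
  have ftc: "(f' has_integral f (2 * pi) - f 0) {0..2 * pi}"
    if "\<And>x. (f has_real_derivative f' x) (at x)" for f f' :: "real \<Rightarrow> real"
    by (intro fundamental_theorem_of_calculus
        has_field_derivative_at_within[OF that, unfolded has_real_derivative_iff_has_vector_derivative])
      simp
  have "((\<lambda>t. v' t * cos t + v t * sin t) has_real_derivative (v'' x + v x) * cos x) (at x)"
    and "((\<lambda>t. v' t * sin t - v t * cos t) has_real_derivative (v'' x + v x) * sin x) (at x)" for x
    by (rule derivative_eq_intros refl v' v'' | simp add: algebra_simps)+
  from this[THEN ftc] v'_periodic v_periodic
  show "((\<lambda>t. (v'' t + v t) * cos t) has_integral 0) {0..2 * pi}"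
    and "((\<lambda>t. (v'' t + v t) * sin t) has_integral 0) {0..2 * pi}"
    by simp_all
qed

lemma smooth_fun_has_real_derivative:
  "smooth_fun u \<Longrightarrow> ((deriv ^^ n) u has_real_derivative (deriv ^^ Suc n) u x) (at x)"
  by (simp add: smooth_fun_def DERIV_deriv_iff_real_differentiable)

lemma fdef_eq_arccot_sph_geod_curv:
  assumes "\<And>x. (u has_real_derivative u' x) (at x)" "\<And>x. (u' has_real_derivative u'' x) (at x)"
    and "\<And>x. (v has_real_derivative v' x) (at x)" "\<And>x. (v' has_real_derivative v'' x) (at x)"
  shows "fdef \<alpha> R u v e t =
    arccot (sph_geod_curv (1 + e * u' t) (e * u'' t) (R + e * v t) (e * v' t) (e * v'' t) / sin \<alpha>)"
proof -
  have "geod_curv (\<lambda>s. sph (s + e * u s) (R + e * v s)) t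
      = sph_geod_curv (1 + e * u' t) (e * u'' t) (R + e * v t) (e * v' t) (e * v'' t)"
    by (rule geod_curv_sph_curve) (auto intro!: derivative_eq_intros assms)
  then show ?thesis
    unfolding fdef_def deformed_curve_def[abs_def] by simp
qed

theorem mainTheorem7:
  fixes R \<alpha> :: real and u v g :: "real \<Rightarrow> real"
  assumes "0 < R" "R < pi / 2"
    and "smooth_fun u" "smooth_fun v"
    and "\<forall>t. u (t + 2 * pi) = u t" "\<forall>t. v (t + 2 * pi) = v t"
    and "0 < \<alpha>" "\<alpha> < pi"
    and "\<forall>t. (\<lambda>\<epsilon>. fdef \<alpha> R u v \<epsilon> t - fdef \<alpha> R u v 0 t - \<epsilon> * g t) \<in> O[at 0](\<lambda>\<epsilon>. \<epsilon> ^ 2)"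
  shows "integral {0..2 * pi} (\<lambda>t. g t * cos t) = 0
       \<and> integral {0..2 * pi} (\<lambda>t. g t * sin t) = 0"
proof -
  have u': "\<And>x. (u has_real_derivative deriv u x) (at x)"
    and u'': "\<And>x. (deriv u has_real_derivative deriv (deriv u) x) (at x)"
    and v': "\<And>x. (v has_real_derivative deriv v x) (at x)"
    and v'': "\<And>x. (deriv v has_real_derivative deriv (deriv v) x) (at x)"
    using smooth_fun_has_real_derivative[OF assms(3), of 0] smooth_fun_has_real_derivative[OF assms(3), of 1]
      smooth_fun_has_real_derivative[OF assms(4), of 0] smooth_fun_has_real_derivative[OF assms(4), of 1]
    by simp_all
  define c where "c = inverse (1 + (sph_geod_curv 1 0 R 0 0 / sin \<alpha>)^2) / ((sin R)^2 * sin \<alpha>)"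
  have g: "g t = c * (deriv (deriv v) t + v t)" for t
  proof -
    have "((\<lambda>e. sph_geod_curv (1 + e * deriv u t) (e * deriv (deriv u) t) (R + e * v t)
        (e * deriv v t) (e * deriv (deriv v) t)) has_real_derivative
        -(deriv (deriv v) t + v t) / (sin R)^2) (at 0)"
      by (rule sph_geod_curv_latitude_has_real_derivative) (use assms(1,2) in auto)
    from DERIV_chain2[OF DERIV_arccot DERIV_cdivide[OF this, of "sin \<alpha>"]]
    have "((\<lambda>e. fdef \<alpha> R u v e t) has_real_derivative c * (deriv (deriv v) t + v t)) (at 0)"
      unfolding fdef_eq_arccot_sph_geod_curv[OF u' u'' v' v''] c_def
      by (simp add: divide_inverse algebra_simps)
    with assms(9) show ?thesis
      using first_order_coeff_eq_deriv by blast
  qed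
  from has_integral_deriv2_add_harmonics[OF assms(6) v' v'', THEN has_integral_mult_right[where c = c]]
  have "((\<lambda>t. g t * cos t) has_integral 0) {0..2 * pi}" "((\<lambda>t. g t * sin t) has_integral 0) {0..2 * pi}"
    unfolding g mult.assoc by simp_all
  then show ?thesis
    by (simp add: integral_unique)
qed

end
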